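(* Let $\phi_C(t)=1/\cosh t$ (the hyperbolic-cosine characteristic function), whose Khintchine pair is $[0,m_C]$ with $m_C(dx)=\frac12\frac{|x|}{1+x^2}\frac{1}{\sinh(\pi|x|/2)}dx$. Its free analogue $\tilde\phi_C$ has Voiculescu transform $$V_{\tilde\phi_C}(it)=-it^2\int_0^\infty\log\cosh(s)\,e^{-ts}ds=i\big[1-t\beta(t/2)\big]=i\big[t\beta(t/2+1)-1\big],\qquad t>0.$$ Consequently, $\beta(s)+\beta(s+1)=1/s$ for all $s>0$.
   Context: $\beta(x):=\sum_{k=0}^\infty\frac{(-1)^k}{x+k}=\frac12[\psi(\frac{x+1}{2})-\psi(\frac x2)]$ for $x>0$, where $\psi=\Gamma'/\Gamma$ is the digamma function. For an infinitely divisible characteristic function $\phi$ with Khintchine exponent $\log\phi$, its free analogue $\tilde\phi$ is the $\boxplus$-infinitely divisible probability measure whose Voiculescu transform satisfies $V_{\tilde\phi}(it)=it^2\int_0^\infty\overline{\log\phi(s)}e^{-ts}ds$, $t>0$; if $\phi$ has Khintchine pair $[0,m]$ with $m$ symmetric, this equals $-it\int_{\mathbb{R}}\frac{1+x^2}{t^2+x^2}m(dx)$. *)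

theory Defs
  imports "HOL-Analysis.Analysis"
begin

definition beta_fn :: "real \<Rightarrow> real" where
  "beta_fn x = (\<Sum>k. (-1) ^ k / (x + real k))"

text \<open>Hyperbolic-cosine characteristic function and its Khintchine exponent
  (the distinguished continuous logarithm, which is the real log since phi_C > 0).\<close>
definition phi_C :: "real \<Rightarrow> real" where
  "phi_C s = 1 / cosh s"

definition log_phi_C :: "real \<Rightarrow> complex" where
  "log_phi_C s = complex_of_real (ln (phi_C s))"

definition free_voiculescu_it :: "(real \<Rightarrow> complex) \<Rightarrow> real \<Rightarrow> complex" where
  "free_voiculescu_it logphi t =
     \<i> * complex_of_real (t ^ 2) *
       (LBINT s:{0..}. cnj (logphi s) * complex_of_real (exp (- (t * s))))"

end

theory Submission
  imports Defs "HOL-Probability.Probability"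
begin

text \<open>For \<open>s > 0\<close> we have \<open>cosh s = e^s (1 + e^(-2s)) / 2\<close>, so the logarithmic series gives
  \<open>ln cosh s = s - ln 2 + (\<Sum>n\<ge>1. (-1)^(n-1) e^(-2ns) / n)\<close>. Integrating termwise against
  \<open>e^(-ts)\<close> turns the series into \<open>\<Sum>n\<ge>1. (-1)^(n-1) / (n (t + 2n))\<close>, which by partial fractions
  is \<open>(ln 2 - \<beta>(t/2 + 1)) / t\<close>; hence \<open>t\<^sup>2 \<integral>\<^sub>0\<^sup>\<infinity> ln (cosh s) e^(-ts) ds = 1 - t \<beta>(t/2 + 1)\<close>.
  Shifting the index in the series defining \<open>\<beta>\<close> gives \<open>\<beta>(s) + \<beta>(s + 1) = 1/s\<close>, which converts
  this into \<open>t \<beta>(t/2) - 1\<close>.\<close>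

lemma summable_beta_series:
  assumes "x > 0"
  shows "summable (\<lambda>k. (-1::real) ^ k / (x + real k))"
proof -
  have "summable (\<lambda>k. (-1::real) ^ k * inverse (x + real k))"
  proof (rule summable_Leibniz'(1))
    show "(\<lambda>n. inverse (x + real n)) \<longlonglongrightarrow> 0"
      by (intro tendsto_inverse_0_at_top
          filterlim_tendsto_add_at_top[OF tendsto_const filterlim_real_sequentially])
  qed (use assms in \<open>auto intro!: le_imp_inverse_le\<close>)
  then show ?thesis
    by (simp add: divide_inverse)
qed

lemma beta_fn_sums:
  assumes "x > 0"
  shows "(\<lambda>k. (-1::real) ^ k / (x + real k)) sums beta_fn x"
  unfolding beta_fn_def using summable_beta_series[OF assms] by (rule summable_sums)

lemma beta_fn_add_one:
  assumes "s > 0"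
  shows "beta_fn s + beta_fn (s + 1) = 1 / s"
proof -
  have "(\<lambda>k. (-1::real) ^ Suc k / (s + real (Suc k))) sums (beta_fn s - 1 / s)"
    using sums_Suc_iff[of "\<lambda>k. (-1::real) ^ k / (s + real k)"] beta_fn_sums[OF assms] by simp
  then have "(\<lambda>k. (-1::real) ^ k / (s + 1 + real k)) sums (1 / s - beta_fn s)"
    using sums_minus by (fastforce simp: add_ac)
  moreover have "(\<lambda>k. (-1::real) ^ k / (s + 1 + real k)) sums beta_fn (s + 1)"
    using assms by (intro beta_fn_sums) simp
  ultimately show ?thesis
    using sums_unique2 by fastforce
qed

lemma has_bochner_integral_power_exp:
  fixes a :: real
  assumes "a > 0"
  shows "has_bochner_integral lborel
           (\<lambda>x. indicator {0..} x * (x ^ i * exp (- (a * x)))) (fact i / a ^ Suc i)"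
proof (rule has_bochner_integral_nn_integral)
  have "(\<integral>\<^sup>+ x. ennreal (indicator {0..} x * (x ^ i * exp (- (a * x)))) \<partial>lborel)
      = (\<integral>\<^sup>+ x. ennreal (1 / a) * ennreal (erlang_density 0 a x * x ^ i) \<partial>lborel)"
    using assms
    by (intro nn_integral_cong)
      (auto simp: erlang_density_def ennreal_mult'[symmetric] split: split_indicator)
  also have "\<dots> = ennreal (1 / a) * (\<integral>\<^sup>+ x. ennreal (erlang_density 0 a x * x ^ i) \<partial>lborel)"
    by (rule nn_integral_cmult) auto
  also have "\<dots> = ennreal (fact i / a ^ Suc i)"
    using assms
    by (simp add: nn_integral_erlang_ith_moment ennreal_mult'[symmetric] divide_simps)
  finally show "(\<integral>\<^sup>+ x. ennreal (indicator {0..} x * (x ^ i * exp (- (a * x)))) \<partial>lborel)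
      = ennreal (fact i / a ^ Suc i)" .
qed (use assms in \<open>auto intro!: AE_I2 split: split_indicator\<close>)

lemma ln_cosh_series:
  fixes s :: real
  assumes "s > 0"
  shows "summable (\<lambda>n. \<bar>(-1) ^ n / real (Suc n) * exp (- (2 * real (Suc n) * s))\<bar>)"
    and "(\<lambda>n. (-1) ^ n / real (Suc n) * exp (- (2 * real (Suc n) * s)))
           sums (ln (cosh s) - s + ln 2)"
proof -
  define q where "q = exp (-2 * s)"
  have q: "0 < q" "q < 1"
    using assms by (auto simp: q_def)
  have q_power: "q ^ Suc n = exp (- (2 * real (Suc n) * s))" for n
    unfolding q_def by (subst exp_of_nat_mult[symmetric]) (simp add: algebra_simps)
  have geometric: "summable (\<lambda>n. q ^ Suc n)"
    using q by simp
  have bound: "norm \<bar>(-1) ^ n / real (Suc n) * q ^ Suc n\<bar> \<le> q ^ Suc n" for n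
    using q by (simp add: abs_mult divide_le_eq)
  show "summable (\<lambda>n. \<bar>(-1) ^ n / real (Suc n) * exp (- (2 * real (Suc n) * s))\<bar>)"
    unfolding q_power[symmetric]
    by (rule summable_comparison_test'[OF geometric bound])
  have "(\<lambda>n. - ((- q) ^ n) / real n) sums ln (1 + q)"
    by (rule ln_series') (use q in simp)
  \<comment> \<open>the index shift is harmless because the \<open>n = 0\<close> term is \<open>-1 / 0 = 0\<close>\<close>
  then have "(\<lambda>n. - ((- q) ^ Suc n) / real (Suc n)) sums ln (1 + q)"
    by (subst sums_Suc_iff) simp
  then have "(\<lambda>n. (-1) ^ n / real (Suc n) * q ^ Suc n) sums ln (1 + q)"
    by (simp add: power_minus[of q] mult.left_commute)
  moreover have "cosh s = exp s * (1 + q) / 2"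
    unfolding cosh_def q_def by (simp add: algebra_simps exp_add[symmetric])
  then have "ln (cosh s) = s + ln (1 + q) - ln 2"
    using q by (simp only:) (simp add: ln_mult ln_div)
  ultimately show "(\<lambda>n. (-1) ^ n / real (Suc n) * exp (- (2 * real (Suc n) * s)))
           sums (ln (cosh s) - s + ln 2)"
    unfolding q_power[symmetric] by simp
qed

lemma ln_cosh_times_exp_series:
  fixes s t :: real
  assumes "s > 0"
  shows "summable (\<lambda>n. \<bar>(-1) ^ n / real (Suc n) * exp (- ((t + 2 * real (Suc n)) * s))\<bar>)"
    and "(\<lambda>n. (-1) ^ n / real (Suc n) * exp (- ((t + 2 * real (Suc n)) * s)))
           sums ((ln (cosh s) - s + ln 2) * exp (- (t * s)))"
proof -
  have exp_split: "exp (- ((t + 2 * real (Suc n)) * s)) = exp (- (2 * real (Suc n) * s)) * exp (- (t * s))"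
    for n
    by (simp add: exp_add[symmetric] algebra_simps)
  show "summable (\<lambda>n. \<bar>(-1) ^ n / real (Suc n) * exp (- ((t + 2 * real (Suc n)) * s))\<bar>)"
    unfolding exp_split using summable_mult2[OF ln_cosh_series(1)[OF assms], of "exp (- (t * s))"]
    by (simp add: abs_mult mult.assoc)
  show "(\<lambda>n. (-1) ^ n / real (Suc n) * exp (- ((t + 2 * real (Suc n)) * s)))
           sums ((ln (cosh s) - s + ln 2) * exp (- (t * s)))"
    unfolding exp_split using sums_mult2[OF ln_cosh_series(2)[OF assms], of "exp (- (t * s))"]
    by (simp add: mult.assoc)
qed

lemma alternating_partial_fraction_sums:
  fixes t :: real
  assumes "t > 0"
  shows "(\<lambda>n. (-1) ^ n / real (Suc n) / (t + 2 * real (Suc n))) sums ((ln 2 - beta_fn (t / 2 + 1)) / t)"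
proof -
  have "(\<lambda>n. ((-1) ^ n / real (Suc n) - (-1) ^ n / (t / 2 + 1 + real n)) / t)
          sums ((ln 2 - beta_fn (t / 2 + 1)) / t)"
    using assms
    by (intro sums_divide sums_diff alternating_harmonic_series_sums beta_fn_sums) simp
  moreover have "((-1) ^ n / real (Suc n) - (-1) ^ n / (t / 2 + 1 + real n)) / t
      = (-1) ^ n / real (Suc n) / (t + 2 * real (Suc n))" for n
  proof -
    have "t / 2 + 1 + real n > 0" "t + 2 * real (Suc n) > 0"
      using assms by auto
    then show ?thesis
      using assms by (simp add: divide_simps) (simp add: algebra_simps)
  qed
  ultimately show ?thesis
    by simp
qed

lemma has_bochner_integral_ln_cosh_exp_tail:
  fixes t :: real
  assumes t: "t > 0"
  shows "has_bochner_integral lborel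
           (\<lambda>s. \<Sum>n. indicator {0..} s * ((-1) ^ n / real (Suc n) * exp (- ((t + 2 * real (Suc n)) * s))))
           ((ln 2 - beta_fn (t / 2 + 1)) / t)"
proof -
  define f where "f n s = indicator {0..} s * ((-1) ^ n / real (Suc n) * exp (- ((t + 2 * real (Suc n)) * s)))"
    for n and s :: real
  have f_integral: "has_bochner_integral lborel (f n) ((-1) ^ n / real (Suc n) / (t + 2 * real (Suc n)))"
    for n
    using has_bochner_integral_mult_right[OF has_bochner_integral_power_exp[of "t + 2 * real (Suc n)" 0],
        of "(-1) ^ n / real (Suc n)"] t
    by (simp add: f_def[abs_def] mult_ac)
  have integrable_f: "integrable lborel (f n)" for n
    using f_integral[of n] by (rule integrable.intros)
  have norm_f_integral:
    "has_bochner_integral lborel (\<lambda>s. norm (f n s)) (1 / (real (Suc n) * (t + 2 * real (Suc n))))" for n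
    using has_bochner_integral_mult_right[OF has_bochner_integral_power_exp[of "t + 2 * real (Suc n)" 0],
        of "1 / real (Suc n)"] t
    by (simp add: f_def abs_mult mult_ac split: split_indicator)
  have "summable (\<lambda>n. 1 / (real (Suc n) * (t + 2 * real (Suc n))))"
  proof (rule summable_comparison_test'[where N = 0])
    show "summable (\<lambda>n. inverse (real (Suc n) ^ 2))"
      using inverse_power_summable[of 2, where 'a = real] summable_Suc_iff[of "\<lambda>n. inverse (real n ^ 2)"]
      by simp
    show "norm (1 / (real (Suc n) * (t + 2 * real (Suc n)))) \<le> inverse (real (Suc n) ^ 2)" for n
      using t by (simp add: power2_eq_square divide_simps mult_left_mono)
  qed
  then have summable_norms: "summable (\<lambda>n. \<integral>s. norm (f n s) \<partial>lborel)"
    unfolding has_bochner_integral_integral_eq[OF norm_f_integral] .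
  have "AE s in lborel. s \<noteq> 0"
    by (rule AE_lborel_singleton)
  then have summable_pointwise: "AE s in lborel. summable (\<lambda>n. norm (f n s))"
  proof eventually_elim
    case (elim s)
    show ?case
    proof (cases "s > 0")
      case True
      then show ?thesis
        using ln_cosh_times_exp_series(1)[OF True] by (simp add: f_def)
    next
      case False
      with elim show ?thesis
        by (simp add: f_def)
    qed
  qed
  have "(\<lambda>n. integral\<^sup>L lborel (f n)) sums (\<integral>s. (\<Sum>n. f n s) \<partial>lborel)"
    by (rule sums_integral[OF integrable_f summable_pointwise summable_norms])
  then have "(\<integral>s. (\<Sum>n. f n s) \<partial>lborel) = (ln 2 - beta_fn (t / 2 + 1)) / t"
    using alternating_partial_fraction_sums[OF t] sums_unique2
    by (simp add: has_bochner_integral_integral_eq[OF f_integral])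
  then show ?thesis
    using integrable_suminf[OF integrable_f summable_pointwise summable_norms]
    by (simp add: has_bochner_integral_iff f_def)
qed

lemma has_bochner_integral_ln_cosh_exp:
  fixes t :: real
  assumes t: "t > 0"
  shows "has_bochner_integral lborel (\<lambda>s. indicator {0..} s * (ln (cosh s) * exp (- (t * s))))
           (1 / t ^ 2 - beta_fn (t / 2 + 1) / t)"
proof -
  define expansion where "expansion s = indicator {0..} s * (s ^ 1 * exp (- (t * s)))
      - ln 2 * (indicator {0..} s * (s ^ 0 * exp (- (t * s))))
      + (\<Sum>n. indicator {0..} s * ((-1) ^ n / real (Suc n) * exp (- ((t + 2 * real (Suc n)) * s))))"
    for s :: real
  have "has_bochner_integral lborel expansion
          (fact 1 / t ^ Suc 1 - ln 2 * (fact 0 / t ^ Suc 0) + (ln 2 - beta_fn (t / 2 + 1)) / t)"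
    unfolding expansion_def using t
    by (intro has_bochner_integral_add has_bochner_integral_diff has_bochner_integral_mult_right
        has_bochner_integral_power_exp has_bochner_integral_ln_cosh_exp_tail)
  then have expansion_integral: "has_bochner_integral lborel expansion (1 / t ^ 2 - beta_fn (t / 2 + 1) / t)"
    by (simp add: diff_divide_distrib power2_eq_square)
  have "AE s in lborel. s \<noteq> 0"
    by (rule AE_lborel_singleton)
  then have expansion_AE:
    "AE s in lborel. expansion s = indicator {0..} s * (ln (cosh s) * exp (- (t * s)))"
  proof eventually_elim
    case (elim s)
    show ?case
    proof (cases "s > 0")
      case True
      have "(\<Sum>n. (-1) ^ n / real (Suc n) * exp (- ((t + 2 * real (Suc n)) * s)))
          = (ln (cosh s) - s + ln 2) * exp (- (t * s))"
        by (rule sums_unique[OF ln_cosh_times_exp_series(2)[OF True], symmetric])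
      with True show ?thesis
        by (simp add: expansion_def algebra_simps)
    next
      case False
      with elim show ?thesis
        by (simp add: expansion_def)
    qed
  qed
  have "continuous_on UNIV (\<lambda>s::real. ln (cosh s) * exp (- (t * s)))"
    by (intro continuous_intros) (auto simp: cosh_real_pos)
  then have "(\<lambda>s. indicator {0..} s * (ln (cosh s) * exp (- (t * s)))) \<in> borel_measurable lborel"
    unfolding measurable_lborel2
    by (intro borel_measurable_times borel_measurable_indicator borel_measurable_continuous_onI) simp_all
  then show ?thesis
    using has_bochner_integral_cong_AE[OF borel_measurable_has_bochner_integral[OF expansion_integral]
        _ expansion_AE] expansion_integral
    by simp
qed

lemma set_integral_ln_cosh_exp:
  fixes t :: real
  assumes "t > 0"
  shows "(LBINT s:{0..}. ln (cosh s) * exp (- (t * s))) = 1 / t ^ 2 - beta_fn (t / 2 + 1) / t"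
  unfolding set_lebesgue_integral_def real_scaleR_def
  by (rule has_bochner_integral_integral_eq[OF has_bochner_integral_ln_cosh_exp[OF assms]])

lemma free_voiculescu_it_log_phi_C:
  "free_voiculescu_it log_phi_C t
     = - \<i> * complex_of_real (t ^ 2) * complex_of_real (LBINT s:{0..}. ln (cosh s) * exp (- (t * s)))"
proof -
  have "cnj (log_phi_C s) = complex_of_real (- ln (cosh s))" for s
    unfolding log_phi_C_def phi_C_def using cosh_real_pos[of s] by (simp add: ln_div)
  then have "(LBINT s:{0..}. cnj (log_phi_C s) * complex_of_real (exp (- (t * s))))
      = (LBINT s. complex_of_real (- (indicator {0..} s * (ln (cosh s) * exp (- (t * s))))))"
    unfolding set_lebesgue_integral_def
    by (intro Bochner_Integration.integral_cong refl) (simp split: split_indicator)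
  also have "\<dots> = - complex_of_real (LBINT s:{0..}. ln (cosh s) * exp (- (t * s)))"
    unfolding integral_complex_of_real integral_minus set_lebesgue_integral_def real_scaleR_def
    by simp
  finally show ?thesis
    unfolding free_voiculescu_it_def by simp
qed

theorem corollary2:
  shows "(\<forall>t::real. t > 0 \<longrightarrow>
            free_voiculescu_it log_phi_C t
              = - \<i> * complex_of_real (t ^ 2) *
                  complex_of_real (LBINT s:{0..}. ln (cosh s) * exp (- (t * s)))
          \<and> free_voiculescu_it log_phi_C t = \<i> * complex_of_real (1 - t * beta_fn (t / 2))
          \<and> free_voiculescu_it log_phi_C t = \<i> * complex_of_real (t * beta_fn (t / 2 + 1) - 1))
       \<and> (\<forall>s::real. s > 0 \<longrightarrow> beta_fn s + beta_fn (s + 1) = 1 / s)"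
proof (intro conjI allI impI)
  fix t :: real
  assume t: "t > 0"
  show V: "free_voiculescu_it log_phi_C t
      = - \<i> * complex_of_real (t ^ 2) * complex_of_real (LBINT s:{0..}. ln (cosh s) * exp (- (t * s)))"
    by (rule free_voiculescu_it_log_phi_C)
  have "- (t ^ 2 * (LBINT s:{0..}. ln (cosh s) * exp (- (t * s)))) = t * beta_fn (t / 2 + 1) - 1"
    unfolding set_integral_ln_cosh_exp[OF t] using t by (simp add: field_simps power2_eq_square)
  then have "complex_of_real (t * beta_fn (t / 2 + 1) - 1)
      = - (complex_of_real (t ^ 2) * complex_of_real (LBINT s:{0..}. ln (cosh s) * exp (- (t * s))))"
    by (metis of_real_minus of_real_mult)
  then show V': "free_voiculescu_it log_phi_C t = \<i> * complex_of_real (t * beta_fn (t / 2 + 1) - 1)"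
    unfolding V by (simp only: mult_minus_left mult_minus_right mult.assoc)
  have "beta_fn (t / 2) + beta_fn (t / 2 + 1) = 1 / (t / 2)"
    using t by (intro beta_fn_add_one) simp
  then have "t * beta_fn (t / 2 + 1) - 1 = 1 - t * beta_fn (t / 2)"
    using t by (simp add: field_simps)
  with V' show "free_voiculescu_it log_phi_C t = \<i> * complex_of_real (1 - t * beta_fn (t / 2))"
    by simp
qed (rule beta_fn_add_one)

end
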